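(* Let $a,b,c>0$ and let $F(x)=F(a,b;c;x)$ for $|x|<1$. If $a+b\ge c\ge 2ab$ and $c>a+b-1/2$, then $1/F(x)$ is concave on $(0,1)$. In particular, $$F\Big(\frac{x+y}{2}\Big)\le\frac{2F(x)F(y)}{F(x)+F(y)}$$ for all $x,y\in(0,1)$, with equality if and only if $x=y$.
   Context: $F(a,b;c;x)={}_2F_1(a,b;c;x)=\sum_{n=0}^\infty\frac{(a,n)(b,n)}{(c,n)\,n!}x^n$ for $|x|<1$ is the Gaussian hypergeometric function, where $(a,0)=1$ and $(a,n)=a(a+1)\cdots(a+n-1)$ for $n\ge1$. *)

theory Defs
  imports "HOL-Analysis.Analysis"
begin

text \<open>Gaussian hypergeometric function F(a,b;c;x), via its power series
  (meaningful for |x| < 1; pochhammer a n = (a,n)).\<close>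
definition hyp2F1 :: "real \<Rightarrow> real \<Rightarrow> real \<Rightarrow> real \<Rightarrow> real" where
  "hyp2F1 a b c x =
     (\<Sum>n. pochhammer a n * pochhammer b n / (pochhammer c n * fact n) * x ^ n)"

end

theory Submission
  imports Defs
begin

(*
  Write F(x) = sum A_n x^n.  Then 1/F is concave exactly where F F'' - 2 F'^2 >= 0, and the
  coefficient of x^k in F F'' - 2 F'^2 is  sum_i A_i A_(N-i) ((N-i)(N-i-1) - 2 i (N-i))  with N = k + 2.
  Symmetrising under i <-> N - i turns the weight into (N(N-1) - 6 i (N-i))/2, whose sum over i
  vanishes.  The hypotheses make the ratios A_(n+1)/A_n increase, so A_i A_(N-i), like the weight,
  decreases as i approaches N/2; by Chebyshev's sum inequality every coefficient is nonnegative.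
  The constant coefficient 2 (A_0 A_2 - A_1^2) is even positive, so (1/F)'' < 0, which gives the
  strict harmonic-mean inequality.
*)

lemma Chebyshev_sum_similarly_ordered:
  fixes a b :: "'i \<Rightarrow> 'a::linordered_idom"
  assumes "\<And>i j. i \<in> S \<Longrightarrow> j \<in> S \<Longrightarrow> 0 \<le> (a i - a j) * (b i - b j)"
  shows "(\<Sum>i\<in>S. a i) * (\<Sum>i\<in>S. b i) \<le> of_nat (card S) * (\<Sum>i\<in>S. a i * b i)"
proof -
  have diag: "(\<Sum>i\<in>S. \<Sum>j\<in>S. a j * b j) = of_nat (card S) * (\<Sum>i\<in>S. a i * b i)"
    by simp
  have "0 \<le> (\<Sum>i\<in>S. \<Sum>j\<in>S. (a i - a j) * (b i - b j))"
    using assms by (intro sum_nonneg) auto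
  also have "\<dots> = (\<Sum>i\<in>S. \<Sum>j\<in>S. a i * b i) + (\<Sum>i\<in>S. \<Sum>j\<in>S. a j * b j)
      - (\<Sum>i\<in>S. \<Sum>j\<in>S. a i * b j) - (\<Sum>i\<in>S. \<Sum>j\<in>S. a j * b i)"
    by (simp add: sum_subtractf sum.distrib algebra_simps)
  also have "\<dots> = 2 * (of_nat (card S) * (\<Sum>i\<in>S. a i * b i) - (\<Sum>i\<in>S. a i) * (\<Sum>i\<in>S. b i))"
    unfolding sum.swap[of "\<lambda>i j. a i * b i"] diag sum_product
    by (simp add: sum.swap[of "\<lambda>i j. a j * b i"] algebra_simps)
  finally show ?thesis by simp
qed

lemma sum_mult_complement:
  "6 * (\<Sum>i\<le>N. real i * (real N - real i)) = (real N - 1) * real N * (real N + 1)"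
proof (induction N)
  case (Suc N)
  have "(\<Sum>i\<le>Suc N. real i * (real (Suc N) - real i))
      = (\<Sum>i\<le>N. real i * (real N - real i) + real i)"
    by (simp add: algebra_simps)
  also have "\<dots> = (\<Sum>i\<le>N. real i * (real N - real i)) + (\<Sum>i\<le>N. real i)"
    by (rule sum.distrib)
  moreover have "2 * (\<Sum>i\<le>N. real i) = real N * (real N + 1)"
    using double_gauss_sum[of N] by (simp add: atLeast0AtMost)
  ultimately show ?case
    using Suc.IH by (simp add: algebra_simps)
qed simp

lemma f''_neg_imp_midpoint_less:
  fixes f f' f'' :: "real \<Rightarrow> real"
  assumes "convex C"
    and f': "\<And>z. z \<in> C \<Longrightarrow> (f has_real_derivative f' z) (at z)"
    and f'': "\<And>z. z \<in> C \<Longrightarrow> (f' has_real_derivative f'' z) (at z)"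
    and neg: "\<And>z. z \<in> C \<Longrightarrow> f'' z < 0"
    and "x \<in> C" "y \<in> C" "x < y"
  shows "f x + f y < 2 * f ((x + y) / 2)"
proof -
  define m where "m = (x + y) / 2"
  have between: "z \<in> C" if "x \<le> z" "z \<le> y" for z
    using assms(1,5,6) that by (metis is_interval_convex_1 mem_is_interval_1_I)
  have m: "x < m" "m < y" "y - m = m - x"
    using \<open>x < y\<close> by (auto simp: m_def field_simps)
  obtain s where s: "x < s" "s < m" "f m - f x = (m - x) * f' s"
    using MVT2[of x m f f'] m(1,2) between f' by (meson less_imp_le order.trans)
  obtain t where t: "m < t" "t < y" "f y - f m = (y - m) * f' t"
    using MVT2[of m y f f'] m(1,2) between f' by (meson less_imp_le order.trans)
  have "f' t < f' s"
  proof (rule DERIV_neg_imp_decreasing[of s t f'])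
    show "s < t" using s t by linarith
    fix z assume "s \<le> z" "z \<le> t"
    then have "z \<in> C" using s t m by (intro between) auto
    then show "\<exists>l. (f' has_real_derivative l) (at z) \<and> l < 0"
      using f'' neg by blast
  qed
  with m have "(y - m) * f' t < (m - x) * f' s"
    by (simp add: mult_strict_left_mono)
  with s t have "f y - f m < f m - f x"
    by simp
  then show ?thesis by (simp add: m_def)
qed

lemma Cauchy_product_powser_sums:
  fixes a b :: "nat \<Rightarrow> 'a::{real_normed_field,banach}"
  assumes a: "\<And>z. norm z < K \<Longrightarrow> summable (\<lambda>n. a n * z ^ n)"
    and b: "\<And>z. norm z < K \<Longrightarrow> summable (\<lambda>n. b n * z ^ n)"
    and "norm x < K"
  shows "(\<lambda>k. (\<Sum>i\<le>k. a i * b (k - i)) * x ^ k) sums ((\<Sum>n. a n * x ^ n) * (\<Sum>n. b n * x ^ n))"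
proof -
  define r :: 'a where "r = of_real ((norm x + K) / 2)"
  have "0 \<le> norm x + K"
    using \<open>norm x < K\<close> norm_ge_zero[of x] by linarith
  then have "norm r = (norm x + K) / 2"
    unfolding r_def norm_of_real by simp
  then have r: "norm x < norm r" "norm r < K"
    using \<open>norm x < K\<close> by auto
  have "(\<lambda>k. \<Sum>i\<le>k. (a i * x ^ i) * (b (k - i) * x ^ (k - i)))
      sums ((\<Sum>n. a n * x ^ n) * (\<Sum>n. b n * x ^ n))"
    using r by (intro Cauchy_product_sums powser_insidea[of _ r] a b)
  moreover have "(a i * x ^ i) * (b (k - i) * x ^ (k - i)) = a i * b (k - i) * x ^ k"
    if "i \<le> k" for i k
    using that by (simp add: power_add[symmetric] ac_simps)
  ultimately show ?thesis
    by (simp add: sum_distrib_right)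
qed

(* For F = sum A_n x^n, curvature_coeff A (k + 2) is the coefficient of x^k in F F'' - 2 F'^2. *)

definition curvature_weight :: "nat \<Rightarrow> nat \<Rightarrow> real" where
  "curvature_weight N i =
     (real N - real i) * (real N - real i - 1) - 2 * (real i * (real N - real i))"

definition curvature_coeff :: "(nat \<Rightarrow> real) \<Rightarrow> nat \<Rightarrow> real" where
  "curvature_coeff A N = (\<Sum>i\<le>N. A i * A (N - i) * curvature_weight N i)"

lemma convolution_diffs_diffs:
  fixes A :: "nat \<Rightarrow> real"
  shows "(\<Sum>i\<le>k. A i * diffs (diffs A) (k - i))
    = (\<Sum>i\<le>k + 2. A i * A (k + 2 - i) * ((real (k + 2) - real i) * (real (k + 2) - real i - 1)))"
proof -
  have "(\<Sum>i\<le>k + 2. A i * A (k + 2 - i) * ((real (k + 2) - real i) * (real (k + 2) - real i - 1)))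
      = (\<Sum>i\<le>k. A i * A (k + 2 - i) * ((real (k + 2) - real i) * (real (k + 2) - real i - 1)))"
    by (simp add: numeral_2_eq_2)
  also have "\<dots> = (\<Sum>i\<le>k. A i * diffs (diffs A) (k - i))"
    by (intro sum.cong refl) (auto simp: diffs_def Suc_diff_le numeral_2_eq_2 algebra_simps)
  finally show ?thesis ..
qed

lemma convolution_diffs:
  fixes A :: "nat \<Rightarrow> real"
  shows "(\<Sum>i\<le>k. diffs A i * diffs A (k - i))
    = (\<Sum>i\<le>k + 2. A i * A (k + 2 - i) * (real i * (real (k + 2) - real i)))"
proof -
  define g where "g i = A i * A (k + 2 - i) * (real i * (real (k + 2) - real i))" for i
  have "sum g {..k + 2} = g 0 + (\<Sum>i\<le>Suc k. g (Suc i))"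
    by (subst sum.atMost_Suc_shift[symmetric]) simp
  also have "\<dots> = (\<Sum>i\<le>k. A (Suc i) * A (k + 1 - i) * (real (Suc i) * (real (k + 2) - real (Suc i))))"
    by (simp add: g_def)
  also have "\<dots> = (\<Sum>i\<le>k. diffs A i * diffs A (k - i))"
    by (intro sum.cong refl) (auto simp: diffs_def Suc_diff_le algebra_simps)
  finally show ?thesis
    by (simp add: g_def)
qed

lemma convolution_curvature:
  fixes A :: "nat \<Rightarrow> real"
  shows "(\<Sum>i\<le>k. A i * diffs (diffs A) (k - i)) - 2 * (\<Sum>i\<le>k. diffs A i * diffs A (k - i))
    = curvature_coeff A (k + 2)"
  unfolding convolution_diffs_diffs convolution_diffs curvature_coeff_def curvature_weight_def
  by (simp add: sum_distrib_left sum_subtractf[symmetric] algebra_simps)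

section \<open>Power series with log-convex coefficients\<close>

locale log_convex_power_series =
  fixes A :: "nat \<Rightarrow> real"
  assumes coeff_pos: "0 < A n"
    and coeff_ratio_incseq: "incseq (\<lambda>n. A (Suc n) / A n)"
    and summable_unit_disc: "\<bar>x\<bar> < 1 \<Longrightarrow> summable (\<lambda>n. A n * x ^ n)"
begin

lemma coeff_shift_le:
  assumes "j \<le> k"
  shows "A (j + d) * A k \<le> A j * A (k + d)"
proof (induction d)
  case (Suc d)
  have "A (Suc (j + d)) / A (j + d) \<le> A (Suc (k + d)) / A (k + d)"
    using coeff_ratio_incseq assms by (simp add: incseq_def)
  then have step: "A (Suc (j + d)) * A (k + d) \<le> A (j + d) * A (Suc (k + d))"
    using coeff_pos[of "j + d"] coeff_pos[of "k + d"] by (simp add: field_simps)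
  have "A (j + d) * (A (Suc (j + d)) * A k) = A (Suc (j + d)) * (A (j + d) * A k)"
    by (simp add: ac_simps)
  also have "\<dots> \<le> A (Suc (j + d)) * (A j * A (k + d))"
    using Suc.IH coeff_pos by (intro mult_left_mono) (auto intro: less_imp_le)
  also have "\<dots> = A j * (A (Suc (j + d)) * A (k + d))"
    by (simp add: ac_simps)
  also have "\<dots> \<le> A j * (A (j + d) * A (Suc (k + d)))"
    using step coeff_pos by (intro mult_left_mono) (auto intro: less_imp_le)
  finally have "A (j + d) * (A (Suc (j + d)) * A k) \<le> A (j + d) * (A j * A (Suc (k + d)))"
    by (simp add: ac_simps)
  then show ?case
    using coeff_pos[of "j + d"] by simp
qed simp

lemma coeff_prod_le:
  assumes "i \<le> N" "j \<le> N" "\<bar>real N - 2 * real i\<bar> \<le> \<bar>real N - 2 * real j\<bar>"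
  shows "A i * A (N - i) \<le> A j * A (N - j)"
proof -
  have towards_centre: "A i * A (N - i) \<le> A l * A (N - l)" if "l \<le> i" "i + l \<le> N" for l
    using coeff_shift_le[of l "N - i" "i - l"] that by simp
  show ?thesis
  proof (cases "2 * j \<le> N")
    case True
    with assms have "j \<le> i" "i + j \<le> N"
      by linarith+
    then show ?thesis
      by (rule towards_centre)
  next
    case False
    with assms have "N - j \<le> i" "i + (N - j) \<le> N"
      by linarith+
    then show ?thesis
      using towards_centre[of "N - j"] assms(2) by (simp add: mult.commute)
  qed
qed

lemma curvature_coeff_nonneg: "0 \<le> curvature_coeff A N"
proof -
  define p where "p i = A i * A (N - i)" for i
  define w where "w i = real N * (real N - 1) - 6 * (real i * (real N - real i))" for i
  have reflect: "(\<Sum>i\<le>N. p i * curvature_weight N i) = (\<Sum>i\<le>N. p i * curvature_weight N (N - i))"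
    by (rule sum.reindex_bij_witness[where i="\<lambda>i. N - i" and j="\<lambda>i. N - i"])
      (auto simp: p_def mult.commute)
  have symmetrize: "curvature_weight N i + curvature_weight N (N - i) = w i" if "i \<le> N" for i
    using that by (simp add: curvature_weight_def w_def algebra_simps)
  have sum_w: "(\<Sum>i\<le>N. w i) = 0"
    using sum_mult_complement[of N] by (simp add: w_def sum_subtractf sum_distrib_left[symmetric])
  have similarly_ordered: "0 \<le> (w i - w j) * (p i - p j)" if "i \<le> N" "j \<le> N" for i j
  proof -
    have w_diff: "w i - w j = 3 / 2 * ((real N - 2 * real i)\<^sup>2 - (real N - 2 * real j)\<^sup>2)"
      by (simp add: w_def power2_eq_square algebra_simps)
    consider "\<bar>real N - 2 * real i\<bar> \<le> \<bar>real N - 2 * real j\<bar>"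
      | "\<bar>real N - 2 * real j\<bar> \<le> \<bar>real N - 2 * real i\<bar>"
      by linarith
    then show ?thesis
    proof cases
      case 1
      then have "p i \<le> p j" "w i \<le> w j"
        using that coeff_prod_le w_diff by (auto simp: p_def abs_le_square_iff)
      then show ?thesis
        by (intro mult_nonpos_nonpos) auto
    next
      case 2
      then have "p j \<le> p i" "w j \<le> w i"
        using that coeff_prod_le w_diff by (auto simp: p_def abs_le_square_iff)
      then show ?thesis
        by (intro mult_nonneg_nonneg) auto
    qed
  qed
  have "(\<Sum>i\<le>N. w i) * (\<Sum>i\<le>N. p i) \<le> of_nat (card {..N}) * (\<Sum>i\<le>N. w i * p i)"
    using similarly_ordered by (intro Chebyshev_sum_similarly_ordered) auto
  then have "0 \<le> (\<Sum>i\<le>N. w i * p i)"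
    by (simp add: sum_w zero_le_mult_iff)
  also have "\<dots> = (\<Sum>i\<le>N. p i * curvature_weight N i) + (\<Sum>i\<le>N. p i * curvature_weight N (N - i))"
    unfolding sum.distrib[symmetric]
    by (intro sum.cong refl) (simp add: symmetrize distrib_left[symmetric] mult.commute)
  also have "\<dots> = 2 * curvature_coeff A N"
    using reflect unfolding p_def curvature_coeff_def by simp
  finally show ?thesis
    by simp
qed

definition F :: "real \<Rightarrow> real" where "F x = (\<Sum>n. A n * x ^ n)"
definition F' :: "real \<Rightarrow> real" where "F' x = (\<Sum>n. diffs A n * x ^ n)"
definition F'' :: "real \<Rightarrow> real" where "F'' x = (\<Sum>n. diffs (diffs A) n * x ^ n)"

lemma summable_diffs_unit_disc: "\<bar>x\<bar> < 1 \<Longrightarrow> summable (\<lambda>n. diffs A n * x ^ n)"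
  by (rule termdiff_converges[where K = 1]) (auto intro: summable_unit_disc)

lemma summable_diffs_diffs_unit_disc: "\<bar>x\<bar> < 1 \<Longrightarrow> summable (\<lambda>n. diffs (diffs A) n * x ^ n)"
  by (rule termdiff_converges[where K = 1]) (auto intro: summable_diffs_unit_disc)

lemma F_has_derivative: "\<bar>x\<bar> < 1 \<Longrightarrow> (F has_real_derivative F' x) (at x)"
  unfolding F_def [abs_def] F'_def
  by (rule termdiffs_strong'[where K = 1]) (auto intro: summable_unit_disc)

lemma F'_has_derivative: "\<bar>x\<bar> < 1 \<Longrightarrow> (F' has_real_derivative F'' x) (at x)"
  unfolding F'_def [abs_def] F''_def
  by (rule termdiffs_strong'[where K = 1]) (auto intro: summable_diffs_unit_disc)

lemma F_pos:
  assumes "0 \<le> x" "x < 1"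
  shows "0 < F x"
proof -
  have "sum (\<lambda>n. A n * x ^ n) {0} \<le> F x"
    unfolding F_def using assms coeff_pos
    by (intro sum_le_suminf summable_unit_disc)
      (auto intro!: mult_nonneg_nonneg simp: less_imp_le[OF coeff_pos])
  then show ?thesis
    using coeff_pos[of 0] by simp
qed

lemma curvature_sums:
  assumes "\<bar>x\<bar> < 1"
  shows "(\<lambda>k. curvature_coeff A (k + 2) * x ^ k) sums (F x * F'' x - 2 * (F' x)\<^sup>2)"
proof -
  have "(\<lambda>k. (\<Sum>i\<le>k. A i * diffs (diffs A) (k - i)) * x ^ k) sums (F x * F'' x)"
    unfolding F_def F''_def using assms
    by (intro Cauchy_product_powser_sums[where K = 1] summable_unit_disc
        summable_diffs_diffs_unit_disc) auto
  moreover have "(\<lambda>k. (\<Sum>i\<le>k. diffs A i * diffs A (k - i)) * x ^ k) sums (F' x * F' x)"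
    unfolding F'_def using assms
    by (intro Cauchy_product_powser_sums[where K = 1] summable_diffs_unit_disc) auto
  ultimately have "(\<lambda>k. (\<Sum>i\<le>k. A i * diffs (diffs A) (k - i)) * x ^ k
      - 2 * ((\<Sum>i\<le>k. diffs A i * diffs A (k - i)) * x ^ k)) sums (F x * F'' x - 2 * (F' x * F' x))"
    by (intro sums_diff sums_mult)
  then show ?thesis
    unfolding convolution_curvature[symmetric] by (simp add: algebra_simps power2_eq_square)
qed

lemma curvature_lower_bound:
  assumes "0 \<le> x" "x < 1"
  shows "2 * (A 0 * A 2 - (A 1)\<^sup>2) \<le> F x * F'' x - 2 * (F' x)\<^sup>2"
proof -
  define c where "c k = curvature_coeff A (k + 2) * x ^ k" for k
  have c_sums: "c sums (F x * F'' x - 2 * (F' x)\<^sup>2)"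
    unfolding c_def using assms by (intro curvature_sums) auto
  have "sum c {0} \<le> suminf c"
    using sums_summable[OF c_sums] assms curvature_coeff_nonneg
    by (intro sum_le_suminf) (auto simp: c_def)
  moreover have "sum c {0} = 2 * (A 0 * A 2 - (A 1)\<^sup>2)"
    by (simp add: c_def curvature_coeff_def curvature_weight_def numeral_2_eq_2 power2_eq_square
        algebra_simps)
  ultimately show ?thesis
    using sums_unique[OF c_sums] by simp
qed

lemma curvature_nonneg:
  assumes "0 \<le> x" "x < 1"
  shows "0 \<le> F x * F'' x - 2 * (F' x)\<^sup>2"
proof -
  have "0 \<le> 2 * (A 0 * A 2 - (A 1)\<^sup>2)"
    using coeff_shift_le[of 0 1 1] by (simp add: power2_eq_square numeral_2_eq_2)
  also have "\<dots> \<le> F x * F'' x - 2 * (F' x)\<^sup>2"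
    using assms by (rule curvature_lower_bound)
  finally show ?thesis .
qed

lemma inverse_F_has_derivative:
  assumes "0 \<le> x" "x < 1"
  shows "((\<lambda>x. 1 / F x) has_real_derivative - F' x / (F x)\<^sup>2) (at x)"
  using assms F_pos[OF assms]
  by (auto intro!: derivative_eq_intros F_has_derivative simp: power2_eq_square)

lemma inverse_F_second_derivative:
  assumes "0 \<le> x" "x < 1"
  shows "((\<lambda>x. - F' x / (F x)\<^sup>2) has_real_derivative
      (2 * (F' x)\<^sup>2 - F x * F'' x) / (F x) ^ 3) (at x)"
  using assms F_pos[OF assms]
  by (auto intro!: derivative_eq_intros F_has_derivative F'_has_derivative
      simp: power2_eq_square power3_eq_cube field_simps)

lemma concave_on_inverse_F: "concave_on {0..<1} (\<lambda>x. 1 / F x)"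
proof (rule f''_le0_imp_concave)
  fix x :: real assume "x \<in> {0..<1}"
  then show "((\<lambda>x. 1 / F x) has_real_derivative - F' x / (F x)\<^sup>2) (at x)"
    and "((\<lambda>x. - F' x / (F x)\<^sup>2) has_real_derivative
      (2 * (F' x)\<^sup>2 - F x * F'' x) / (F x) ^ 3) (at x)"
    using inverse_F_has_derivative inverse_F_second_derivative by auto
  show "(2 * (F' x)\<^sup>2 - F x * F'' x) / (F x) ^ 3 \<le> 0"
    using curvature_nonneg F_pos \<open>x \<in> {0..<1}\<close> by (intro divide_nonpos_pos) auto
qed simp

lemma F_midpoint_less_harmonic_mean:
  assumes "(A 1)\<^sup>2 < A 0 * A 2" and "x \<in> {0..<1}" "y \<in> {0..<1}" "x \<noteq> y"
  shows "F ((x + y) / 2) < 2 * F x * F y / (F x + F y)"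
proof -
  have inverse_midpoint: "1 / F u + 1 / F v < 2 * (1 / F ((u + v) / 2))"
    if "u \<in> {0..<1}" "v \<in> {0..<1}" "u < v" for u v
  proof (rule f''_neg_imp_midpoint_less[OF _ _ _ _ that])
    fix z :: real assume "z \<in> {0..<1}"
    then show "((\<lambda>x. 1 / F x) has_real_derivative - F' z / (F z)\<^sup>2) (at z)"
      and "((\<lambda>x. - F' x / (F x)\<^sup>2) has_real_derivative
        (2 * (F' z)\<^sup>2 - F z * F'' z) / (F z) ^ 3) (at z)"
      using inverse_F_has_derivative inverse_F_second_derivative by auto
    show "(2 * (F' z)\<^sup>2 - F z * F'' z) / (F z) ^ 3 < 0"
      using curvature_lower_bound[of z] assms(1) F_pos \<open>z \<in> {0..<1}\<close>
      by (intro divide_neg_pos) auto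
  qed simp
  have "1 / F x + 1 / F y < 2 * (1 / F ((x + y) / 2))"
    using inverse_midpoint[of x y] inverse_midpoint[of y x] assms(2-4)
    by (cases "x < y") (auto simp: add.commute)
  moreover have "0 < F x" "0 < F y" "0 < F ((x + y) / 2)"
    using assms(2,3) F_pos by auto
  ultimately show ?thesis
    by (simp add: field_simps)
qed

end

section \<open>Coefficients of the hypergeometric series\<close>

definition hyp2F1_coeff :: "real \<Rightarrow> real \<Rightarrow> real \<Rightarrow> nat \<Rightarrow> real" where
  "hyp2F1_coeff a b c n = pochhammer a n * pochhammer b n / (pochhammer c n * fact n)"

definition hyp2F1_ratio :: "real \<Rightarrow> real \<Rightarrow> real \<Rightarrow> real \<Rightarrow> real" where
  "hyp2F1_ratio a b c t = (a + t) * (b + t) / ((c + t) * (t + 1))"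

lemma hyp2F1_coeff_0 [simp]: "hyp2F1_coeff a b c 0 = 1"
  by (simp add: hyp2F1_coeff_def)

lemma hyp2F1_coeff_Suc:
  assumes "pochhammer c (Suc n) \<noteq> 0"
  shows "hyp2F1_coeff a b c (Suc n) = hyp2F1_coeff a b c n * hyp2F1_ratio a b c n"
proof -
  have "pochhammer c n \<noteq> 0" "c + n \<noteq> 0"
    using assms by (auto simp: pochhammer_Suc)
  then show ?thesis
    by (simp add: hyp2F1_coeff_def hyp2F1_ratio_def pochhammer_Suc field_simps)
qed

lemma hyp2F1_coeff_pos: "0 < a \<Longrightarrow> 0 < b \<Longrightarrow> 0 < c \<Longrightarrow> 0 < hyp2F1_coeff a b c n"
  by (simp add: hyp2F1_coeff_def pochhammer_pos)

lemma hyp2F1_ratio_pos: "0 < a \<Longrightarrow> 0 < b \<Longrightarrow> 0 < c \<Longrightarrow> 0 \<le> t \<Longrightarrow> 0 < hyp2F1_ratio a b c t"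
  by (simp add: hyp2F1_ratio_def)

lemma hyp2F1_coeff_ratio:
  assumes "0 < a" "0 < b" "0 < c"
  shows "hyp2F1_coeff a b c (Suc n) / hyp2F1_coeff a b c n = hyp2F1_ratio a b c n"
  using assms hyp2F1_coeff_pos[OF assms, of n]
  by (simp add: hyp2F1_coeff_Suc pochhammer_pos less_imp_neq[symmetric])

lemma hyp2F1_ratio_le_1:
  assumes "0 < c" "a * b \<le> c" "a + b \<le> c + 1" "0 \<le> t"
  shows "hyp2F1_ratio a b c t \<le> 1"
proof -
  have "(c + t) * (t + 1) - (a + t) * (b + t) = (c - a * b) + (c + 1 - a - b) * t"
    by (simp add: algebra_simps)
  also have "\<dots> \<ge> 0"
    using assms by simp
  finally show ?thesis
    using assms by (simp add: hyp2F1_ratio_def divide_le_eq_1)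
qed

lemma hyp2F1_ratio_mono:
  assumes "0 < a" "0 < b" "0 < c" "2 * a * b \<le> c" "c \<le> a + b" "a + b \<le> c + 1" "0 \<le> t"
  shows "hyp2F1_ratio a b c t \<le> hyp2F1_ratio a b c (t + 1)"
proof -
  have "(a + (t + 1)) * (b + (t + 1)) * ((c + t) * (t + 1))
      - (a + t) * (b + t) * ((c + (t + 1)) * (t + 1 + 1))
      = (c + 1 - a - b) * t\<^sup>2 + ((c - 2 * a * b) + c + (c + 1 - a - b)) * t
        + ((c - 2 * a * b) + c * (a + b - a * b))"
    by (simp add: algebra_simps power2_eq_square)
  also have "\<dots> \<ge> 0"
  proof -
    have "a * b \<le> a + b"
      using assms mult_pos_pos[of a b] by linarith
    then show ?thesis
      using assms by (intro add_nonneg_nonneg mult_nonneg_nonneg) auto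
  qed
  finally have cross: "(a + t) * (b + t) * ((c + (t + 1)) * (t + 1 + 1))
      \<le> (a + (t + 1)) * (b + (t + 1)) * ((c + t) * (t + 1))"
    by simp
  have denominators: "0 < (c + t) * (t + 1)" "0 < (c + (t + 1)) * (t + 1 + 1)"
    using assms by auto
  then show ?thesis
    unfolding hyp2F1_ratio_def frac_le_eq[OF denominators[THEN less_imp_neq, symmetric]]
    using cross mult_pos_pos[OF denominators] by (intro divide_nonpos_pos) auto
qed

lemma hyp2F1_ratio_0_less_1:
  assumes "0 < a" "0 < b" "0 < c" "2 * a * b \<le> c" "c \<le> a + b"
  shows "hyp2F1_ratio a b c 0 < hyp2F1_ratio a b c 1"
proof -
  have "0 < (c - 2 * a * b) + c * (a + b - a * b)"
    using assms mult_pos_pos[of a b] by (intro add_nonneg_pos mult_pos_pos) auto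
  then have "a * b * ((c + 1) * 2) < (a + 1) * (b + 1) * c"
    by (simp add: algebra_simps)
  then show ?thesis
    using assms by (simp add: hyp2F1_ratio_def frac_less_eq divide_neg_pos)
qed

lemma hyp2F1_coeff_le_1:
  assumes "0 < a" "0 < b" "0 < c" "a * b \<le> c" "a + b \<le> c + 1"
  shows "hyp2F1_coeff a b c n \<le> 1"
proof (induction n)
  case (Suc n)
  have "hyp2F1_coeff a b c (Suc n) = hyp2F1_coeff a b c n * hyp2F1_ratio a b c n"
    using assms(3) by (intro hyp2F1_coeff_Suc) (simp add: pochhammer_pos less_imp_neq[symmetric])
  also have "\<dots> \<le> 1 * 1"
    using Suc.IH hyp2F1_ratio_le_1[of c a b n] hyp2F1_ratio_pos[of a b c n] assms
    by (intro mult_mono) auto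
  finally show ?case
    by simp
qed simp

lemma log_convex_power_series_hyp2F1_coeff:
  assumes "0 < a" "0 < b" "0 < c" "2 * a * b \<le> c" "c \<le> a + b" "a + b \<le> c + 1"
  shows "log_convex_power_series (hyp2F1_coeff a b c)"
proof
  show "0 < hyp2F1_coeff a b c n" for n
    using assms(1-3) by (rule hyp2F1_coeff_pos)
  show "incseq (\<lambda>n. hyp2F1_coeff a b c (Suc n) / hyp2F1_coeff a b c n)"
    unfolding hyp2F1_coeff_ratio[OF assms(1-3)]
  proof (rule incseq_SucI)
    show "hyp2F1_ratio a b c n \<le> hyp2F1_ratio a b c (Suc n)" for n
      using hyp2F1_ratio_mono[OF assms, of n] by (simp add: add.commute)
  qed
  have le_1: "hyp2F1_coeff a b c n \<le> 1" for n
    using assms mult_pos_pos[of a b] by (intro hyp2F1_coeff_le_1) auto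
  show "summable (\<lambda>n. hyp2F1_coeff a b c n * x ^ n)" if "\<bar>x\<bar> < 1" for x
  proof (rule summable_comparison_test')
    show "summable (\<lambda>n. \<bar>x\<bar> ^ n)"
      using that by simp
    show "norm (hyp2F1_coeff a b c n * x ^ n) \<le> \<bar>x\<bar> ^ n" for n
      using le_1[of n] hyp2F1_coeff_pos[OF assms(1-3), of n]
      by (simp add: abs_mult power_abs mult_left_le_one_le)
  qed
qed

lemma hyp2F1_coeff_strictly_log_convex:
  assumes "0 < a" "0 < b" "0 < c" "2 * a * b \<le> c" "c \<le> a + b"
  shows "(hyp2F1_coeff a b c 1)\<^sup>2 < hyp2F1_coeff a b c 0 * hyp2F1_coeff a b c 2"
proof -
  have "hyp2F1_coeff a b c (Suc m) = hyp2F1_coeff a b c m * hyp2F1_ratio a b c m" for m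
    using assms(3) by (intro hyp2F1_coeff_Suc) (simp add: pochhammer_pos less_imp_neq[symmetric])
  then have A1: "hyp2F1_coeff a b c 1 = hyp2F1_ratio a b c 0"
    and A2: "hyp2F1_coeff a b c 2 = hyp2F1_ratio a b c 0 * hyp2F1_ratio a b c 1"
    by (simp_all add: numeral_2_eq_2)
  have "hyp2F1_ratio a b c 0 * hyp2F1_ratio a b c 0 < hyp2F1_ratio a b c 0 * hyp2F1_ratio a b c 1"
    using assms hyp2F1_ratio_0_less_1 hyp2F1_ratio_pos[of a b c 0]
    by (intro mult_strict_left_mono) auto
  then show ?thesis
    using A1 A2 by (simp add: power2_eq_square)
qed

theorem theorem1p4:
  fixes a b c :: real
  assumes "a > 0" and "b > 0" and "c > 0"
    and "a + b \<ge> c" and "c \<ge> 2 * a * b" and "c > a + b - 1/2"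
  shows "concave_on {0<..<1} (\<lambda>x. 1 / hyp2F1 a b c x)
    \<and> (\<forall>x\<in>{0<..<1::real}. \<forall>y\<in>{0<..<1::real}.
         hyp2F1 a b c ((x + y) / 2)
           \<le> 2 * hyp2F1 a b c x * hyp2F1 a b c y / (hyp2F1 a b c x + hyp2F1 a b c y)
       \<and> (hyp2F1 a b c ((x + y) / 2)
           = 2 * hyp2F1 a b c x * hyp2F1 a b c y / (hyp2F1 a b c x + hyp2F1 a b c y)
          \<longleftrightarrow> x = y))"
proof -
  interpret log_convex_power_series "hyp2F1_coeff a b c"
    \<comment> \<open>of the hypothesis c > a + b - 1/2 only the weaker a + b \<le> c + 1 is needed\<close>
    using assms by (intro log_convex_power_series_hyp2F1_coeff) auto
  have hyp2F1_eq: "hyp2F1 a b c = F"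
    by (simp add: fun_eq_iff hyp2F1_def F_def hyp2F1_coeff_def)
  have concave: "concave_on {0<..<1} (\<lambda>x. 1 / F x)"
    using concave_on_inverse_F unfolding concave_on_def by (rule convex_on_subset) auto
  have "(hyp2F1_coeff a b c 1)\<^sup>2 < hyp2F1_coeff a b c 0 * hyp2F1_coeff a b c 2"
    using assms by (intro hyp2F1_coeff_strictly_log_convex) auto
  then have strict: "F ((x + y) / 2) < 2 * F x * F y / (F x + F y)"
    if "x \<in> {0<..<1}" "y \<in> {0<..<1}" "x \<noteq> y" for x y
    using that by (intro F_midpoint_less_harmonic_mean) auto
  have diagonal: "F ((x + x) / 2) = 2 * F x * F x / (F x + F x)" if "x \<in> {0<..<1}" for x
    using that F_pos[of x] by (simp add: field_simps)
  show ?thesis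
    unfolding hyp2F1_eq
  proof (intro conjI ballI concave)
    fix x y :: real assume x: "x \<in> {0<..<1}" and y: "y \<in> {0<..<1}"
    show "F ((x + y) / 2) \<le> 2 * F x * F y / (F x + F y)"
      using strict[OF x y] diagonal[OF x] by (cases "x = y") auto
    show "F ((x + y) / 2) = 2 * F x * F y / (F x + F y) \<longleftrightarrow> x = y"
      using strict[OF x y] diagonal[OF x] by (cases "x = y") auto
  qed
qed

end
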